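(* Let $\rho\ge\chi>0$. The linear search strategy driven by a $(\rho,\chi)$-excursion profile $G_\pm$ is $(1+2\rho)$-robust and $(1+2\chi)$-consistent.
   Context: Linear search: an unknown target $T\in\mathbb{R}\setminus\{0\}$; a searcher starts at the origin and performs excursions: in an excursion to a signed endpoint $z\neq0$ it moves from the origin toward $z$, stops immediately if it reaches the target, and otherwise returns to the origin. The cost is the total distance traveled until termination. The prediction is normalized to $+1$. A deterministic strategy is a bi-infinite sequence $(y_n)_{n\in\mathbb{Z}}$ of nonzero reals with $\mathrm{sgn}(y_n)\ne\mathrm{sgn}(y_{n+1})$ and $|y_n|<|y_{n+2}|$ for all $n$; its cost on $T$ is $|T|+2\sum_{n<n_*}|y_n|$ with $n_*=\min\{n:\mathrm{sgn}(y_n)=\mathrm{sgn}(T),\ |y_n|\ge|T|\}$. A randomized strategy $Y$ is a distribution over deterministic strategies with expected cost $\mathrm{cost}_Y(T)$; it is $\rho$-robust if $\mathrm{cost}_Y(T)\le\rho|T|$ for all $T\ne0$, and $\chi$-consistent if $\mathrm{cost}_Y(+1)\le\chi$. For $\rho\ge\chi>0$, a $(\rho,\chi)$-excursion profile is a pair $G_\pm=(G_+,G_-)$ of non-decreasing, left-continuous functions $G_+,G_-:\mathbb{R}\to(0,\infty)$ such that (plus-offset) $G_+(x)\ge1$ for $x>0$ and $G_+(x)<1$ for $x<0$; (robustness) $C_+(x)\le\rho G_+(x)$ and $C_-(x)\le\rho G_-(x)$ for all $x\in\mathbb{R}$; (consistency) $C_+(0)\le\chi$; where $C_+(x):=\int_{-\infty}^{x}G_+(t)\,\mathrm{d}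 t+\int_{-\infty}^{x}G_-(t)\,\mathrm{d} t$ and $C_-(x):=\int_{-\infty}^{x+1}G_+(t)\,\mathrm{d} t+\int_{-\infty}^{x}G_-(t)\,\mathrm{d} t$. The strategy driven by $G_\pm$ uses a single $U\sim\mathrm{Unif}(0,1]$ and the excursion sequence $\cdots\to+G_+(n+U)\to-G_-(n+U)\to+G_+(n+1+U)\to-G_-(n+1+U)\to\cdots$. *)

theory Defs
  imports "HOL-Analysis.Analysis"
begin

text \<open>A deterministic strategy is a bi-infinite sequence y :: int \<Rightarrow> real of signed
  excursion endpoints.\<close>

definition hits :: "(int \<Rightarrow> real) \<Rightarrow> real \<Rightarrow> int \<Rightarrow> bool" where
  "hits y T n \<longleftrightarrow> sgn (y n) = sgn T \<and> \<bar>y n\<bar> \<ge> \<bar>T\<bar>"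

definition nstar :: "(int \<Rightarrow> real) \<Rightarrow> real \<Rightarrow> int" where
  "nstar y T = (THE n. hits y T n \<and> (\<forall>m<n. \<not> hits y T m))"

text \<open>Cost |T| + 2 \<Sum>_{n < n_*} |y_n| (in ennreal, so a divergent sum is infinity).\<close>
definition det_cost :: "(int \<Rightarrow> real) \<Rightarrow> real \<Rightarrow> ennreal" where
  "det_cost y T = ennreal \<bar>T\<bar> + 2 * (\<Sum>\<^sub>\<infinity> n\<in>{..<nstar y T}. ennreal \<bar>y n\<bar>)"

text \<open>The deterministic strategy driven by (G+,G-) for a realization u of U:
  ... \<rightarrow> +G+(n+u) \<rightarrow> -G-(n+u) \<rightarrow> +G+(n+1+u) \<rightarrow> ...,
  indexed as y(2n) = G+(n+u), y(2n+1) = -G-(n+u).\<close>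
definition driven_seq :: "(real \<Rightarrow> real) \<Rightarrow> (real \<Rightarrow> real) \<Rightarrow> real \<Rightarrow> int \<Rightarrow> real" where
  "driven_seq Gp Gm u k =
     (if even k then Gp (real_of_int (k div 2) + u) else - Gm (real_of_int (k div 2) + u))"

definition driven_cost :: "(real \<Rightarrow> real) \<Rightarrow> (real \<Rightarrow> real) \<Rightarrow> real \<Rightarrow> ennreal" where
  "driven_cost Gp Gm T = (\<integral>\<^sup>+ u\<in>{0<..1}. det_cost (driven_seq Gp Gm u) T \<partial>lborel)"

definition robust :: "(real \<Rightarrow> ennreal) \<Rightarrow> real \<Rightarrow> bool" where
  "robust cost rho \<longleftrightarrow> (\<forall>T. T \<noteq> 0 \<longrightarrow> cost T \<le> ennreal (rho * \<bar>T\<bar>))"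

definition consistent :: "(real \<Rightarrow> ennreal) \<Rightarrow> real \<Rightarrow> bool" where
  "consistent cost chi \<longleftrightarrow> cost 1 \<le> ennreal chi"

definition Cplus :: "(real \<Rightarrow> real) \<Rightarrow> (real \<Rightarrow> real) \<Rightarrow> real \<Rightarrow> ennreal" where
  "Cplus Gp Gm x = (\<integral>\<^sup>+ t\<in>{..x}. ennreal (Gp t) \<partial>lborel) + (\<integral>\<^sup>+ t\<in>{..x}. ennreal (Gm t) \<partial>lborel)"

definition Cminus :: "(real \<Rightarrow> real) \<Rightarrow> (real \<Rightarrow> real) \<Rightarrow> real \<Rightarrow> ennreal" where
  "Cminus Gp Gm x = (\<integral>\<^sup>+ t\<in>{..x+1}. ennreal (Gp t) \<partial>lborel) + (\<integral>\<^sup>+ t\<in>{..x}. ennreal (Gm t) \<partial>lborel)"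

definition excursion_profile :: "real \<Rightarrow> real \<Rightarrow> (real \<Rightarrow> real) \<Rightarrow> (real \<Rightarrow> real) \<Rightarrow> bool" where
  "excursion_profile rho chi Gp Gm \<longleftrightarrow>
     mono Gp \<and> mono Gm \<and>
     (\<forall>x. continuous (at_left x) Gp) \<and> (\<forall>x. continuous (at_left x) Gm) \<and>
     (\<forall>x. Gp x > 0) \<and> (\<forall>x. Gm x > 0) \<and>
     (\<forall>x>0. Gp x \<ge> 1) \<and> (\<forall>x<0. Gp x < 1) \<and>
     (\<forall>x. Cplus Gp Gm x \<le> ennreal (rho * Gp x)) \<and>
     (\<forall>x. Cminus Gp Gm x \<le> ennreal (rho * Gm x)) \<and>
     Cplus Gp Gm 0 \<le> ennreal chi"

end

theory Submission
  imports Defs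
begin

text \<open>For a target \<open>T > 0\<close> and offset \<open>u\<close>, the searcher is caught in the first round \<open>n\<close>
  with \<open>G\<^sub>+(n + u) \<ge> T\<close>, so every earlier excursion belongs to a round with \<open>G\<^sub>+(n + u) < T\<close>
  and costs \<open>G\<^sub>+(n + u) + G\<^sub>-(n + u)\<close> per round. Averaging over \<open>u \<in> (0,1]\<close> turns the sum over
  rounds into \<open>\<integral> (G\<^sub>+ + G\<^sub>-)\<close> over \<open>{G\<^sub>+ < T}\<close>, which is at most \<open>C\<^sub>+(a) \<le> \<rho> G\<^sub>+(a) \<le> \<rho> T\<close> for
  \<open>a = sup {G\<^sub>+ < T}\<close>, using left-continuity. Consistency is the case \<open>T = 1\<close>, \<open>a = 0\<close>.
  A negative target is a positive one for the mirrored profile \<open>(G\<^sub>-, G\<^sub>+(\<cdot> + 1))\<close>, whose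
  \<open>C\<^sub>+\<close> is the original \<open>C\<^sub>-\<close>.\<close>

lemma infsum_le_nn_integral_count_space:
  fixes f :: "'a \<Rightarrow> ennreal"
  shows "(\<Sum>\<^sub>\<infinity>x\<in>A. f x) \<le> (\<integral>\<^sup>+x. f x \<partial>count_space A)"
proof (rule infsum_le_finite_sums)
  show "f summable_on A" by (simp add: nonneg_summable_on_complete)
  fix F assume F: "finite F" "F \<subseteq> A"
  have "sum f F = (\<integral>\<^sup>+x. f x \<partial>count_space F)"
    using F by (simp add: nn_integral_count_space_finite)
  also have "\<dots> = (\<integral>\<^sup>+x. f x * indicator F x \<partial>count_space A)"
    using F by (auto simp: nn_integral_count_space_indicator indicator_def intro!: nn_integral_cong)
  also have "\<dots> \<le> (\<integral>\<^sup>+x. f x \<partial>count_space A)"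
    by (intro nn_integral_mono) (simp add: indicator_def)
  finally show "sum f F \<le> (\<integral>\<^sup>+x. f x \<partial>count_space A)" .
qed

lemma nn_integral_count_space_int_pairs:
  fixes f :: "int \<Rightarrow> ennreal"
  shows "(\<integral>\<^sup>+k. f k \<partial>count_space UNIV) = (\<integral>\<^sup>+n. f (2*n) + f (2*n+1) \<partial>count_space UNIV)"
proof -
  have even_bij: "bij_betw (\<lambda>n::int. 2*n) UNIV {k. even k}"
    by (rule bij_betwI[where g="\<lambda>k. k div 2"]) auto
  have odd_bij: "bij_betw (\<lambda>n::int. 2*n+1) UNIV {k. odd k}"
    by (rule bij_betwI[where g="\<lambda>k. k div 2"]) (auto elim: oddE)
  have "(\<integral>\<^sup>+k. f k \<partial>count_space UNIV)
      = (\<integral>\<^sup>+k. f k * indicator {k. even k} k + f k * indicator {k. odd k} k \<partial>count_space UNIV)"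
    by (intro nn_integral_cong) (simp add: indicator_def)
  also have "\<dots> = (\<integral>\<^sup>+k. f k \<partial>count_space {k. even k}) + (\<integral>\<^sup>+k. f k \<partial>count_space {k. odd k})"
    by (simp add: nn_integral_add nn_integral_count_space_indicator)
  also have "\<dots> = (\<integral>\<^sup>+n. f (2*n) \<partial>count_space UNIV) + (\<integral>\<^sup>+n. f (2*n+1) \<partial>count_space UNIV)"
    by (simp only: nn_integral_bij_count_space[OF even_bij] nn_integral_bij_count_space[OF odd_bij])
  also have "\<dots> = (\<integral>\<^sup>+n. f (2*n) + f (2*n+1) \<partial>count_space UNIV)"
    by (simp add: nn_integral_add)
  finally show ?thesis .
qed

lemma borel_measurable_sum_int_shifts [measurable]:
  fixes \<Phi> :: "real \<Rightarrow> ennreal"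
  assumes [measurable]: "\<Phi> \<in> borel_measurable borel"
  shows "(\<lambda>u. \<integral>\<^sup>+n. \<Phi> (real_of_int n + u) \<partial>count_space UNIV) \<in> borel_measurable borel"
proof -
  have "bij_betw (from_nat_into (UNIV::int set)) UNIV UNIV"
    using bij_betw_from_nat_into[of "UNIV::int set"] by simp
  then have "(\<integral>\<^sup>+n. \<Phi> (real_of_int n + u) \<partial>count_space UNIV)
      = (\<Sum>i. \<Phi> (real_of_int (from_nat_into UNIV i) + u))" for u
    by (simp add: nn_integral_bij_count_space[symmetric] nn_integral_count_space_nat)
  then show ?thesis by simp
qed

lemma nn_integral_periodize_int:
  fixes \<Phi> :: "real \<Rightarrow> ennreal"
  assumes [measurable]: "\<Phi> \<in> borel_measurable borel"
  shows "(\<integral>\<^sup>+u\<in>{0<..1}. (\<integral>\<^sup>+n. \<Phi> (real_of_int n + u) \<partial>count_space UNIV) \<partial>lborel)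
     = (\<integral>\<^sup>+t. \<Phi> t \<partial>lborel)"
proof -
  let ?I = "\<lambda>n::int. {real_of_int n<..real_of_int n + 1}"
  have shift: "(\<integral>\<^sup>+u. \<Phi> (real_of_int n + u) * indicator {0<..1} u \<partial>lborel)
      = (\<integral>\<^sup>+t. \<Phi> t * indicator (?I n) t \<partial>lborel)" for n
    using nn_integral_real_affine[of "\<lambda>t. \<Phi> t * indicator (?I n) t" 1 "real_of_int n"]
    by (simp add: indicator_def)
  have cover: "(\<integral>\<^sup>+n. \<Phi> t * indicator (?I n) t \<partial>count_space UNIV) = \<Phi> t" for t
  proof -
    have I_iff: "t \<in> ?I n \<longleftrightarrow> n = \<lceil>t\<rceil> - 1" for n
      using ceiling_correct[of t] ceiling_unique[of "n + 1" t] by auto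
    then have "(\<integral>\<^sup>+n. \<Phi> t * indicator (?I n) t \<partial>count_space UNIV)
        = (\<Sum>n\<in>{\<lceil>t\<rceil> - 1}. \<Phi> t * indicator (?I n) t)"
      using I_iff by (intro nn_integral_count_space') auto
    also have "\<dots> = \<Phi> t"
      using I_iff[of "\<lceil>t\<rceil> - 1"] by (simp add: indicator_def)
    finally show ?thesis .
  qed
  have "(\<integral>\<^sup>+u\<in>{0<..1}. (\<integral>\<^sup>+n. \<Phi> (real_of_int n + u) \<partial>count_space UNIV) \<partial>lborel)
     = (\<integral>\<^sup>+u. (\<integral>\<^sup>+n. \<Phi> (real_of_int n + u) * indicator {0<..1} u \<partial>count_space UNIV) \<partial>lborel)"
    by (simp add: nn_integral_multc)
  also have "\<dots> = (\<integral>\<^sup>+n. (\<integral>\<^sup>+t. \<Phi> t * indicator (?I n) t \<partial>lborel) \<partial>count_space UNIV)"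
    by (subst nn_integral_count_space_nn_integral) (auto simp: shift)
  also have "\<dots> = (\<integral>\<^sup>+t. (\<integral>\<^sup>+n. \<Phi> t * indicator (?I n) t \<partial>count_space UNIV) \<partial>lborel)"
    by (rule nn_integral_count_space_nn_integral[symmetric]) auto
  also have "\<dots> = (\<integral>\<^sup>+t. \<Phi> t \<partial>lborel)"
    by (simp add: cover)
  finally show ?thesis .
qed

lemma interval_le_set_nn_integral_Iic:
  fixes G :: "real \<Rightarrow> real"
  assumes "a \<le> b" and "b \<le> x" and "0 \<le> c" and "\<And>t. a < t \<Longrightarrow> t \<le> b \<Longrightarrow> c \<le> G t"
  shows "ennreal (c * (b - a)) \<le> (\<integral>\<^sup>+t\<in>{..x}. ennreal (G t) \<partial>lborel)"
proof -
  have "ennreal (c * (b - a)) = (\<integral>\<^sup>+t. ennreal c * indicator {a<..b} t \<partial>lborel)"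
    using assms(1,3) by (simp add: nn_integral_cmult_indicator ennreal_mult)
  also have "\<dots> \<le> (\<integral>\<^sup>+t\<in>{..x}. ennreal (G t) \<partial>lborel)"
    using assms(2,4) by (intro nn_integral_mono) (auto simp: indicator_def ennreal_leI)
  finally show ?thesis .
qed

lemma mono_left_continuous_sublevel_bound:
  fixes g :: "real \<Rightarrow> real"
  assumes "mono g" and "\<And>x. continuous (at_left x) g" and "g x0 < T" and "T \<le> g x1"
  shows "\<exists>a. {t. g t < T} \<subseteq> {..a} \<and> g a \<le> T"
proof -
  define S where "S = {t. g t < T}"
  have "bdd_above S"
  proof (rule bdd_aboveI)
    fix t assume "t \<in> S"
    show "t \<le> x1"
    proof (rule ccontr)
      assume "\<not> t \<le> x1"
      then have "g x1 \<le> g t" using assms(1) by (simp add: monoD)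
      with \<open>t \<in> S\<close> assms(4) show False unfolding S_def by simp
    qed
  qed
  moreover have "S \<noteq> {}"
    using assms(3) unfolding S_def by auto
  ultimately have below_Sup: "\<exists>s\<in>S. t < s" if "t < Sup S" for t
    using that less_cSup_iff by blast
  have "eventually (\<lambda>t. g t \<le> T) (at_left (Sup S))"
  proof (rule eventually_at_leftI[of "Sup S - 1"])
    fix t assume "t \<in> {Sup S - 1<..<Sup S}"
    then obtain s where "s \<in> S" "t < s" using below_Sup by auto
    then have "g t \<le> g s" using assms(1) by (simp add: monoD)
    with \<open>s \<in> S\<close> show "g t \<le> T" unfolding S_def by simp
  qed simp
  moreover have "(g \<longlongrightarrow> g (Sup S)) (at_left (Sup S))"
    using assms(2) by (simp add: continuous_within)
  ultimately have "g (Sup S) \<le> T"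
    using trivial_limit_at_left_real[of "Sup S"] by (intro tendsto_upperbound) (simp_all add: trivial_limit_def)
  moreover have "S \<subseteq> {..Sup S}"
    using \<open>bdd_above S\<close> by (auto intro: cSup_upper)
  ultimately show ?thesis
    unfolding S_def by blast
qed

lemma nstar_eqI:
  assumes "hits y T n" and "\<And>k. k < n \<Longrightarrow> \<not> hits y T k"
  shows "nstar y T = n"
  unfolding nstar_def
proof (rule the_equality)
  fix m assume "hits y T m \<and> (\<forall>k<m. \<not> hits y T k)"
  with assms show "m = n" by (meson linorder_neqE)
qed (use assms in blast)

lemma ex_first_hit:
  assumes "hits y T m" and "\<And>k. hits y T k \<Longrightarrow> L \<le> k"
  shows "\<exists>n. hits y T n \<and> (\<forall>k<n. \<not> hits y T k)"
proof -
  define j where "j = (LEAST j::nat. hits y T (L + int j))"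
  have "hits y T (L + int (nat (m - L)))"
    using assms by simp
  then have "hits y T (L + int j)"
    unfolding j_def by (rule LeastI)
  moreover have "\<not> hits y T k" if "k < L + int j" for k
  proof
    assume k: "hits y T k"
    with assms(2) have "k = L + int (nat (k - L))" by simp
    with k have "j \<le> nat (k - L)"
      unfolding j_def by (metis Least_le)
    with \<open>k < L + int j\<close> assms(2)[OF k] show False by (simp add: le_nat_iff)
  qed
  ultimately show ?thesis by blast
qed

lemma det_cost_uminus: "det_cost (\<lambda>k. - y k) (- T) = det_cost y T"
  by (simp add: det_cost_def nstar_def hits_def sgn_minus)

lemma det_cost_shift:
  assumes "hits y T (n + 1)" and "\<And>k. k < n + 1 \<Longrightarrow> \<not> hits y T k"
  shows "det_cost (\<lambda>k. y (k + 1)) T = det_cost y T"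
proof -
  have "nstar y T = n + 1"
    using assms by (rule nstar_eqI)
  moreover have "nstar (\<lambda>k. y (k + 1)) T = n"
    using assms by (intro nstar_eqI) (auto simp: hits_def)
  moreover have "(\<Sum>\<^sub>\<infinity>k\<in>{..<n}. ennreal \<bar>y (k + 1)\<bar>) = (\<Sum>\<^sub>\<infinity>k\<in>{..<n + 1}. ennreal \<bar>y k\<bar>)"
  proof -
    have "(\<lambda>k. k + 1) ` {..<n} = {..<n + 1}"
      by (auto intro!: image_eqI[where x="x - 1" for x])
    then show ?thesis
      using infsum_reindex[of "\<lambda>k. k + 1" "{..<n}" "\<lambda>k. ennreal \<bar>y k\<bar>"] by (simp add: comp_def)
  qed
  ultimately show ?thesis
    unfolding det_cost_def by simp
qed

lemma hits_driven_seq_pos: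
  assumes "\<And>x. 0 \<le> Gm x" and "0 < T"
  shows "hits (driven_seq Gp Gm u) T k \<longleftrightarrow> even k \<and> T \<le> Gp (real_of_int (k div 2) + u)"
  using assms(1)[of "real_of_int (k div 2) + u"] assms(2)
  by (auto simp: hits_def driven_seq_def sgn_if split: if_splits)

lemma driven_seq_first_hit:
  assumes "mono Gp" and "\<And>x. 0 \<le> Gm x" and "0 < T"
    and "Gp x0 < T" and "T \<le> Gp x1"
  shows "\<exists>n. hits (driven_seq Gp Gm u) T n \<and> (\<forall>k<n. \<not> hits (driven_seq Gp Gm u) T k)"
proof (rule ex_first_hit)
  have "Gp x1 \<le> Gp (real_of_int \<lceil>x1 - u\<rceil> + u)"
    using \<open>mono Gp\<close> by (rule monoD) linarith
  then show "hits (driven_seq Gp Gm u) T (2 * \<lceil>x1 - u\<rceil>)"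
    using assms(2,3,5) by (simp add: hits_driven_seq_pos)
next
  fix k assume "hits (driven_seq Gp Gm u) T k"
  then have k: "even k" "Gp x0 < Gp (real_of_int (k div 2) + u)"
    using assms(2-4) by (auto simp: hits_driven_seq_pos)
  then have "x0 < real_of_int (k div 2) + u"
    using \<open>mono Gp\<close> by (meson monoD not_le)
  with k(1) show "2 * \<lfloor>x0 - u\<rfloor> \<le> k"
    by (elim evenE) linarith
qed

lemma det_cost_driven_seq_le:
  assumes "mono Gp" and "\<And>x. 0 \<le> Gp x" and "\<And>x. 0 \<le> Gm x" and "0 < T"
    and "Gp x0 < T" and "T \<le> Gp x1"
  shows "det_cost (driven_seq Gp Gm u) T \<le> ennreal T + 2 *
    (\<integral>\<^sup>+n. (ennreal (Gp (real_of_int n + u)) + ennreal (Gm (real_of_int n + u)))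
       * indicator {t. Gp t < T} (real_of_int n + u) \<partial>count_space UNIV)"
proof -
  define y where "y = driven_seq Gp Gm u"
  obtain N where "hits y T N" and before: "\<And>k. k < N \<Longrightarrow> \<not> hits y T k"
    using driven_seq_first_hit[of Gp Gm T x0 x1 u] assms unfolding y_def by blast
  then have "nstar y T = N" by (rule nstar_eqI)
  let ?f = "\<lambda>k. ennreal \<bar>y k\<bar> * indicator {..<N} k"
  have pair_le: "?f (2*n) + ?f (2*n+1) \<le> (ennreal (Gp (real_of_int n + u)) + ennreal (Gm (real_of_int n + u)))
       * indicator {t. Gp t < T} (real_of_int n + u)" for n
  proof (cases "2*n < N")
    case True
    then have "Gp (real_of_int n + u) < T"
      using before[of "2*n"] assms(3,4) unfolding y_def by (simp add: hits_driven_seq_pos)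
    moreover have "y (2*n) = Gp (real_of_int n + u)" and "y (2*n+1) = - Gm (real_of_int n + u)"
      by (simp_all add: y_def driven_seq_def)
    ultimately show ?thesis
      using assms(2,3) by (simp add: indicator_def add_mono mult_le_one ennreal_leI)
  qed simp
  have "(\<Sum>\<^sub>\<infinity>k\<in>{..<N}. ennreal \<bar>y k\<bar>) \<le> (\<integral>\<^sup>+k. ennreal \<bar>y k\<bar> \<partial>count_space {..<N})"
    by (rule infsum_le_nn_integral_count_space)
  also have "\<dots> = (\<integral>\<^sup>+k. ?f k \<partial>count_space UNIV)"
    by (rule nn_integral_count_space_indicator) simp
  also have "\<dots> = (\<integral>\<^sup>+n. ?f (2*n) + ?f (2*n+1) \<partial>count_space UNIV)"
    by (rule nn_integral_count_space_int_pairs)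
  also have "\<dots> \<le> (\<integral>\<^sup>+n. (ennreal (Gp (real_of_int n + u)) + ennreal (Gm (real_of_int n + u)))
       * indicator {t. Gp t < T} (real_of_int n + u) \<partial>count_space UNIV)"
    by (intro nn_integral_mono pair_le)
  finally show ?thesis
    unfolding det_cost_def y_def[symmetric] \<open>nstar y T = N\<close> using assms(4)
    by (intro add_mono mult_left_mono) auto
qed

lemma driven_seq_mirror:
  "driven_seq Gm (\<lambda>t. Gp (t + 1)) u k = - driven_seq Gp Gm u (k + 1)"
proof (cases "even k")
  case True
  then show ?thesis by (simp add: driven_seq_def even_succ_div_two)
next
  case False
  then obtain n where "k = 2 * n + 1" by (meson oddE)
  then show ?thesis by (simp add: driven_seq_def algebra_simps)
qed

lemma nn_integral_sublevel_le_Cplus: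
  assumes [measurable]: "Gp \<in> borel_measurable borel" "Gm \<in> borel_measurable borel"
    and "S \<subseteq> {..a}"
  shows "(\<integral>\<^sup>+t. (ennreal (Gp t) + ennreal (Gm t)) * indicator S t \<partial>lborel) \<le> Cplus Gp Gm a"
proof -
  have "(\<integral>\<^sup>+t. (ennreal (Gp t) + ennreal (Gm t)) * indicator S t \<partial>lborel)
      \<le> (\<integral>\<^sup>+t. ennreal (Gp t) * indicator {..a} t + ennreal (Gm t) * indicator {..a} t \<partial>lborel)"
    using assms(3) by (intro nn_integral_mono) (auto simp: indicator_def)
  also have "\<dots> = Cplus Gp Gm a"
    unfolding Cplus_def by (rule nn_integral_add) auto
  finally show ?thesis .
qed

lemma driven_cost_le_Cplus:
  assumes "mono Gp" and [measurable]: "Gm \<in> borel_measurable borel"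
    and "\<And>x. 0 \<le> Gp x" and "\<And>x. 0 \<le> Gm x" and "0 < T"
    and "Gp x0 < T" and "{t. Gp t < T} \<subseteq> {..a}"
  shows "driven_cost Gp Gm T \<le> ennreal T + 2 * Cplus Gp Gm a"
proof -
  have [measurable]: "Gp \<in> borel_measurable borel"
    using \<open>mono Gp\<close> by (rule borel_measurable_mono)
  have "a + 1 \<notin> {t. Gp t < T}"
    using assms(7) by auto
  then have "T \<le> Gp (a + 1)"
    by simp
  define \<Phi> where "\<Phi> t = (ennreal (Gp t) + ennreal (Gm t)) * indicator {t. Gp t < T} t" for t
  have [measurable]: "\<Phi> \<in> borel_measurable borel"
    unfolding \<Phi>_def by measurable
  let ?P = "\<lambda>u. \<integral>\<^sup>+n. \<Phi> (real_of_int n + u) \<partial>count_space UNIV"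
  have "driven_cost Gp Gm T \<le> (\<integral>\<^sup>+u\<in>{0<..1}. ennreal T + 2 * ?P u \<partial>lborel)"
    unfolding driven_cost_def \<Phi>_def
    by (intro nn_integral_mono mult_right_mono det_cost_driven_seq_le[OF assms(1,3,4,5,6) \<open>T \<le> Gp (a + 1)\<close>])
       simp
  also have "\<dots> = ennreal T + 2 * (\<integral>\<^sup>+u\<in>{0<..1}. ?P u \<partial>lborel)"
    by (simp add: distrib_right mult.assoc nn_integral_add nn_integral_cmult)
  also have "\<dots> = ennreal T + 2 * (\<integral>\<^sup>+t. \<Phi> t \<partial>lborel)"
    by (simp add: nn_integral_periodize_int)
  also have "\<dots> \<le> ennreal T + 2 * Cplus Gp Gm a"
    unfolding \<Phi>_def using assms(7)
    by (intro add_left_mono mult_left_mono nn_integral_sublevel_le_Cplus) auto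
  finally show ?thesis .
qed

text \<open>\<open>G\<close> is unbounded because its integral over \<open>{..x}\<close> grows at least linearly in \<open>x\<close>,
  and it drops below every positive level because otherwise its integral over \<open>{..0}\<close> would be
  infinite.\<close>

lemma crosses_level:
  fixes G :: "real \<Rightarrow> real"
  assumes "mono G" and pos: "\<And>x. 0 < G x"
    and bound: "\<And>x. (\<integral>\<^sup>+t\<in>{..x}. ennreal (G t) \<partial>lborel) \<le> ennreal (rho * G x)"
    and "0 < T"
  shows "\<exists>x0. G x0 < T" and "\<exists>x1. T \<le> G x1"
proof -
  show "\<exists>x0. G x0 < T"
  proof (rule ccontr)
    assume "\<nexists>x0. G x0 < T"
    then have above: "T \<le> G t" for t by (simp add: not_less)
    define N where "N = \<bar>rho * G 0\<bar> / T + 1"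
    have "N > 0" using \<open>0 < T\<close> unfolding N_def by (simp add: add_nonneg_pos)
    have "ennreal (T * (0 - - N)) \<le> (\<integral>\<^sup>+t\<in>{..0}. ennreal (G t) \<partial>lborel)"
      using \<open>N > 0\<close> \<open>0 < T\<close> above by (intro interval_le_set_nn_integral_Iic) auto
    also have "\<dots> \<le> ennreal (rho * G 0)"
      by (rule bound)
    also have "\<dots> \<le> ennreal \<bar>rho * G 0\<bar>"
      by (rule ennreal_leI) simp
    finally have "T * N \<le> \<bar>rho * G 0\<bar>"
      by (simp add: ennreal_le_iff)
    moreover have "T * N = \<bar>rho * G 0\<bar> + T"
      using \<open>0 < T\<close> unfolding N_def by (simp add: field_simps)
    ultimately show False
      using \<open>0 < T\<close> by linarith
  qed
  show "\<exists>x1. T \<le> G x1"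
  proof (rule ccontr)
    assume "\<nexists>x1. T \<le> G x1"
    then have below: "G t < T" for t by (simp add: not_le)
    define x where "x = (\<bar>rho\<bar> * T + 1) / G 0"
    have "x > 0"
      unfolding x_def using pos[of 0] \<open>0 < T\<close> by (intro divide_pos_pos add_nonneg_pos) auto
    have "G 0 \<le> G t" if "0 < t" for t
      using that \<open>mono G\<close> by (simp add: monoD)
    then have "ennreal (G 0 * (x - 0)) \<le> (\<integral>\<^sup>+t\<in>{..x}. ennreal (G t) \<partial>lborel)"
      using \<open>x > 0\<close> pos[of 0] by (intro interval_le_set_nn_integral_Iic) auto
    also have "\<dots> \<le> ennreal (rho * G x)"
      by (rule bound)
    also have "\<dots> \<le> ennreal (\<bar>rho\<bar> * T)"
    proof (rule ennreal_leI)
      have "rho * G x \<le> \<bar>rho\<bar> * G x"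
        using pos[of x] by (intro mult_right_mono) auto
      also have "\<dots> \<le> \<bar>rho\<bar> * T"
        using below[of x] by (intro mult_left_mono) auto
      finally show "rho * G x \<le> \<bar>rho\<bar> * T" .
    qed
    finally have "G 0 * x \<le> \<bar>rho\<bar> * T"
      using \<open>0 < T\<close> by (simp add: ennreal_le_iff)
    then show False
      using pos[of 0] unfolding x_def by simp
  qed
qed

lemma driven_cost_pos_target_le:
  assumes "mono Gp" and "\<And>x. continuous (at_left x) Gp" and "Gm \<in> borel_measurable borel"
    and "\<And>x. 0 < Gp x" and "\<And>x. 0 \<le> Gm x"
    and Cplus_le: "\<And>x. Cplus Gp Gm x \<le> ennreal (rho * Gp x)" and "0 \<le> rho" and "0 < T"
  shows "driven_cost Gp Gm T \<le> ennreal ((1 + 2 * rho) * T)"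
proof -
  have "(\<integral>\<^sup>+t\<in>{..x}. ennreal (Gp t) \<partial>lborel) \<le> ennreal (rho * Gp x)" for x
    using Cplus_le[of x] unfolding Cplus_def by (rule order.trans[rotated]) simp
  then obtain x0 x1 where "Gp x0 < T" "T \<le> Gp x1"
    using crosses_level[of Gp rho T] assms(1,4,8) by blast
  then obtain a where a: "{t. Gp t < T} \<subseteq> {..a}" "Gp a \<le> T"
    using mono_left_continuous_sublevel_bound[OF assms(1,2)] by blast
  have "driven_cost Gp Gm T \<le> ennreal T + 2 * Cplus Gp Gm a"
    using \<open>Gp x0 < T\<close> a(1) assms(1,3-5,8) by (intro driven_cost_le_Cplus) (auto intro: less_imp_le)
  also have "\<dots> \<le> ennreal T + 2 * ennreal (rho * T)"
    using Cplus_le[of a] mult_left_mono[OF a(2) \<open>0 \<le> rho\<close>]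
    by (intro add_left_mono mult_left_mono) (auto intro: order.trans ennreal_leI)
  also have "\<dots> = ennreal ((1 + 2 * rho) * T)"
    using assms(7,8) by (simp add: distrib_right ennreal_plus ennreal_mult'' ennreal_mult mult.assoc)
  finally show ?thesis .
qed

lemma Cminus_eq_Cplus_mirror:
  assumes "Gp \<in> borel_measurable borel"
  shows "Cminus Gp Gm x = Cplus Gm (\<lambda>t. Gp (t + 1)) x"
proof -
  have "(\<integral>\<^sup>+t\<in>{..x + 1}. ennreal (Gp t) \<partial>lborel) = (\<integral>\<^sup>+t\<in>{..x}. ennreal (Gp (t + 1)) \<partial>lborel)"
    using nn_integral_real_affine[of "\<lambda>t. ennreal (Gp t) * indicator {..x + 1} t" 1 1] assms
    by (simp add: add.commute indicator_def)
  then show ?thesis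
    unfolding Cminus_def Cplus_def by (simp add: add.commute)
qed

lemma driven_cost_mirror:
  assumes "mono Gm" and "\<And>x. 0 \<le> Gp x" and "T < 0"
    and "Gm x0 < - T" and "- T \<le> Gm x1"
  shows "driven_cost Gp Gm T = driven_cost Gm (\<lambda>t. Gp (t + 1)) (- T)"
  unfolding driven_cost_def
proof (intro nn_integral_cong arg_cong[where f="\<lambda>c. c * _"])
  fix u
  define y where "y = driven_seq Gp Gm u"
  have mirror: "driven_seq Gm (\<lambda>t. Gp (t + 1)) u = (\<lambda>k. - y (k + 1))"
    unfolding y_def by (rule ext) (rule driven_seq_mirror)
  obtain n where n: "hits (\<lambda>k. - y (k + 1)) (- T) n" "\<forall>k<n. \<not> hits (\<lambda>k. - y (k + 1)) (- T) k"
    using driven_seq_first_hit[of Gm "\<lambda>t. Gp (t + 1)" "- T" x0 x1 u] assms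
    unfolding mirror by auto
  have "hits y T (n + 1)"
    using n(1) by (simp add: hits_def sgn_minus)
  moreover have "\<not> hits y T k" if "k < n + 1" for k
    using that n(2)[rule_format, of "k - 1"] by (simp add: hits_def sgn_minus)
  ultimately show "det_cost y T = det_cost (driven_seq Gm (\<lambda>t. Gp (t + 1)) u) (- T)"
    unfolding mirror det_cost_uminus[of "\<lambda>k. y (k + 1)"] by (rule det_cost_shift[symmetric])
qed

lemma driven_cost_neg_target_le:
  assumes "mono Gp" and "mono Gm" and "\<And>x. continuous (at_left x) Gm"
    and "\<And>x. 0 \<le> Gp x" and "\<And>x. 0 < Gm x"
    and Cminus_le: "\<And>x. Cminus Gp Gm x \<le> ennreal (rho * Gm x)" and "0 \<le> rho" and "T < 0"
  shows "driven_cost Gp Gm T \<le> ennreal ((1 + 2 * rho) * - T)"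
proof -
  define Gp' where "Gp' t = Gp (t + 1)" for t
  have "mono Gp'"
    using \<open>mono Gp\<close> unfolding Gp'_def mono_def by simp
  then have Gp'_measurable: "Gp' \<in> borel_measurable borel"
    by (rule borel_measurable_mono)
  have Cplus_mirror_le: "Cplus Gm Gp' x \<le> ennreal (rho * Gm x)" for x
    using Cminus_le[of x] borel_measurable_mono[OF \<open>mono Gp\<close>]
    unfolding Gp'_def by (simp add: Cminus_eq_Cplus_mirror)
  then have "(\<integral>\<^sup>+t\<in>{..x}. ennreal (Gm t) \<partial>lborel) \<le> ennreal (rho * Gm x)" for x
    unfolding Cplus_def by (rule order.trans[rotated]) simp
  then obtain x0 x1 where "Gm x0 < - T" "- T \<le> Gm x1"
    using crosses_level[of Gm rho "- T"] assms(2,5,8) by auto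
  then have "driven_cost Gp Gm T = driven_cost Gm Gp' (- T)"
    unfolding Gp'_def using assms(2,4,8) by (intro driven_cost_mirror)
  also have "\<dots> \<le> ennreal ((1 + 2 * rho) * - T)"
    using assms(2,3,5,7,8) Gp'_measurable Cplus_mirror_le
    by (intro driven_cost_pos_target_le) (auto simp: Gp'_def assms(4) less_imp_le)
  finally show ?thesis .
qed

theorem lemma4:
  fixes rho chi :: real and Gp Gm :: "real \<Rightarrow> real"
  assumes "rho \<ge> chi" and "chi > 0"
    and "excursion_profile rho chi Gp Gm"
  shows "robust (driven_cost Gp Gm) (1 + 2 * rho) \<and> consistent (driven_cost Gp Gm) (1 + 2 * chi)"
proof -
  note profile = assms(3)[unfolded excursion_profile_def]
  have "0 \<le> rho" using assms(1,2) by simp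
  have Gm_measurable: "Gm \<in> borel_measurable borel"
    using profile by (auto intro: borel_measurable_mono)
  have "driven_cost Gp Gm T \<le> ennreal ((1 + 2 * rho) * \<bar>T\<bar>)" if "T \<noteq> 0" for T
  proof (cases "0 < T")
    case True
    with profile Gm_measurable \<open>0 \<le> rho\<close> show ?thesis
      using driven_cost_pos_target_le[of Gp Gm rho T] by (auto simp: less_imp_le)
  next
    case False
    with \<open>T \<noteq> 0\<close> profile \<open>0 \<le> rho\<close> show ?thesis
      using driven_cost_neg_target_le[of Gp Gm rho T] by (auto simp: less_imp_le)
  qed
  then have robust: "robust (driven_cost Gp Gm) (1 + 2 * rho)"
    unfolding robust_def by blast
  have "driven_cost Gp Gm 1 \<le> ennreal 1 + 2 * Cplus Gp Gm 0"
    using profile Gm_measurable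
    by (intro driven_cost_le_Cplus[of Gp Gm 1 "-1" 0]) (auto intro: less_imp_le simp: not_less[symmetric])
  also have "\<dots> \<le> ennreal (1 + 2 * chi)"
    using profile assms(2) by (simp add: ennreal_plus ennreal_mult add_left_mono mult_left_mono)
  finally have "consistent (driven_cost Gp Gm) (1 + 2 * chi)"
    unfolding consistent_def .
  with robust show ?thesis ..
qed

end
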